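(* Let $k \geqslant 2$, $\ell \geqslant 0$, and let $A$ and $N$ be as defined in the context. Then $A$ accepts the string $a_1 a_2 \cdots a_{N-1}$.
   Context: A 2DFA $(\Sigma, Q, q_0, \delta, F)$: $\Sigma$ is a finite alphabet not containing end-markers $\vdash, \dashv$; $Q$ finite set of states; $q_0 \in Q$ initial; $\delta: Q \times (\Sigma \cup \{\vdash,\dashv\}) \to Q \times \{-1,+1\}$ partial; $F \subseteq Q$ accepting. On input $w = b_1\cdots b_m$ it works on tape $\vdash b_1 \cdots b_m \dashv$, starting at $\vdash$ in $q_0$; if $\delta(q,c)=(r,d)$ it enters $r$ and moves one cell in direction $d$; if undefined it rejects; it accepts if it ever arrives at $\dashv$ in a state of $F$; it may loop. Construction of $A$. Fix $k \geqslant 2$, $\ell \geqslant 0$, $Q^+ = \{1, \ldots, k\}$, $Q^- = \{1', \ldots, \ell'\}$, ordered by $i < j$ and $i' < j'$ iff $i < j$. A pair is $(P,R)$ with $P \subseteq Q^-$, $R \subseteq Q^+$, $|R| = |P|+1$. Writing $P = \{p_1 < \cdots < p_m\}$ and $R = \{r_1 < \cdots < r_{m+1}\}$, the sequence of the pair is the integer sequence $(r_1, -p_1, r_2, -p_2, \ldots, r_m, -p_m, r_{m+1})$, where a primed state $i'$ contributes the integer $i$ (so $-p_j$ for $p_j = i'$ is the integer $-i$). Pairs are ordered by the lexicographic order of their sequences (a proper prefix is smaller). Let $N = \binom{k+\ell}{\ell+1}$ be the number of pairs and enumerate them increasingly as $(P^{(1)},R^{(1)}) < \cdots < (P^{(N)},R^{(N)})$,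 with $P^{(i)} = \{p^{(i)}_1 < \cdots < p^{(i)}_{m_i}\}$ and $R^{(i)} = \{r^{(i)}_1 < \cdots < r^{(i)}_{m_i+1}\}$; in particular $(P^{(1)},R^{(1)}) = (\emptyset,\{1\})$ and $(P^{(N)},R^{(N)}) = (\emptyset,\{k\})$. The 2DFA $A$ has alphabet $\Sigma = \{a_1, \ldots, a_{N-1}\}$ (distinct symbols), states $Q = Q^+ \cup Q^-$, initial state $q_0 = 1$, accepting states $F = \{k\}$, and exactly the following transitions: $\delta(1, \vdash) = (r^{(1)}_1, +1)$; and for each $i \in \{1,\ldots,N-1\}$: $\delta(r^{(i)}_j, a_i) = (p^{(i)}_j, -1)$ for $j = 1, \ldots, m_i$; $\delta(r^{(i)}_{m_i+1}, a_i) = (r^{(i+1)}_1, +1)$; $\delta(p^{(i+1)}_j, a_i) = (r^{(i+1)}_{j+1}, +1)$ for $j = 1, \ldots, m_{i+1}$. No transitions are defined at $\dashv$. *)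

theory Defs
  imports Main
begin

datatype 's tsym = LMark | RMark | Letter 's

datatype dir = MoveL | MoveR

record ('q, 's) tdfa =
  tdelta :: "'q \<Rightarrow> 's tsym \<Rightarrow> ('q \<times> dir) option"
  tinit  :: "'q"
  tacc   :: "'q set"

definition tape :: "'s list \<Rightarrow> int \<Rightarrow> 's tsym option" where
  "tape w p = (if p = 0 then Some LMark
               else if p = int (length w) + 1 then Some RMark
               else if 1 \<le> p \<and> p \<le> int (length w) then Some (Letter (w ! nat (p - 1)))
               else None)"

definition dir_val :: "dir \<Rightarrow> int" where
  "dir_val d = (case d of MoveL \<Rightarrow> -1 | MoveR \<Rightarrow> 1)"

text \<open>One computation step on configurations (state, head position); \<open>None\<close> = halt/reject.\<close>
definition tstep :: "('q, 's, 'z) tdfa_scheme \<Rightarrow> 's list \<Rightarrow> 'q \<times> int \<Rightarrow> ('q \<times> int) option" where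
  "tstep M w c = (case tape w (snd c) of
      None \<Rightarrow> None
    | Some a \<Rightarrow> (case tdelta M (fst c) a of
        None \<Rightarrow> None
      | Some (r, d) \<Rightarrow> Some (r, snd c + dir_val d)))"

definition trun :: "('q, 's, 'z) tdfa_scheme \<Rightarrow> 's list \<Rightarrow> nat \<Rightarrow> ('q \<times> int) option" where
  "trun M w n = ((\<lambda>c. Option.bind c (tstep M w)) ^^ n) (Some (tinit M, 0))"

definition taccepts :: "('q, 's, 'z) tdfa_scheme \<Rightarrow> 's list \<Rightarrow> bool" where
  "taccepts M w \<longleftrightarrow> (\<exists>n q. trun M w n = Some (q, int (length w) + 1) \<and> q \<in> tacc M)"

text \<open>States: \<open>Inl i\<close> is the state \<open>i \<in> Q\<^sup>+\<close>, \<open>Inr i\<close> is the primed state \<open>i' \<in> Q\<^sup>-\<close>.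
  A pair \<open>(P,R)\<close> is represented by the sets of indices \<open>P \<subseteq> {1..\<ell>}\<close>, \<open>R \<subseteq> {1..k}\<close>.\<close>
definition pairs :: "nat \<Rightarrow> nat \<Rightarrow> (nat set \<times> nat set) set" where
  "pairs k l = {(P, R). P \<subseteq> {1..l} \<and> R \<subseteq> {1..k} \<and> card R = card P + 1}"

fun interleave :: "int list \<Rightarrow> int list \<Rightarrow> int list" where
  "interleave (r # rs) (p # ps) = r # p # interleave rs ps"
| "interleave rs [] = rs"
| "interleave [] ps = ps"

definition pair_seq :: "nat set \<times> nat set \<Rightarrow> int list" where
  "pair_seq pr = interleave (map int (sorted_list_of_set (snd pr)))
                            (map (\<lambda>p. - int p) (sorted_list_of_set (fst pr)))"

text \<open>Lexicographic order on sequences (a proper prefix is smaller).\<close>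
definition pair_less :: "nat set \<times> nat set \<Rightarrow> nat set \<times> nat set \<Rightarrow> bool" where
  "pair_less a b \<longleftrightarrow> (pair_seq a, pair_seq b) \<in> lexord {(x, y). x < (y::int)}"

definition numPairs :: "nat \<Rightarrow> nat \<Rightarrow> nat" where
  "numPairs k l = card (pairs k l)"

text \<open>The \<open>i\<close>-th pair in increasing order (1-indexed).\<close>
definition pairI :: "nat \<Rightarrow> nat \<Rightarrow> nat \<Rightarrow> nat set \<times> nat set" where
  "pairI k l i = (THE pr. pr \<in> pairs k l \<and> card {q \<in> pairs k l. pair_less q pr} = i - 1)"

definition mI :: "nat \<Rightarrow> nat \<Rightarrow> nat \<Rightarrow> nat" where
  "mI k l i = card (fst (pairI k l i))"

definition rI :: "nat \<Rightarrow> nat \<Rightarrow> nat \<Rightarrow> nat \<Rightarrow> nat" where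
  "rI k l i j = sorted_list_of_set (snd (pairI k l i)) ! (j - 1)"

definition pI :: "nat \<Rightarrow> nat \<Rightarrow> nat \<Rightarrow> nat \<Rightarrow> nat" where
  "pI k l i j = sorted_list_of_set (fst (pairI k l i)) ! (j - 1)"

text \<open>The transitions of \<open>A\<close>, listed as a relation; the letter \<open>a\<^sub>i\<close> is \<open>Letter i\<close>.\<close>
definition Atrans :: "nat \<Rightarrow> nat \<Rightarrow> nat + nat \<Rightarrow> nat tsym \<Rightarrow> (nat + nat) \<times> dir \<Rightarrow> bool" where
  "Atrans k l q c t \<longleftrightarrow>
     (q = Inl 1 \<and> c = LMark \<and> t = (Inl (rI k l 1 1), MoveR)) \<or>
     (\<exists>i \<in> {1..numPairs k l - 1}. c = Letter i \<and>
        ((\<exists>j \<in> {1..mI k l i}. q = Inl (rI k l i j) \<and> t = (Inr (pI k l i j), MoveL)) \<or>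
         (q = Inl (rI k l i (mI k l i + 1)) \<and> t = (Inl (rI k l (i + 1) 1), MoveR)) \<or>
         (\<exists>j \<in> {1..mI k l (i + 1)}. q = Inr (pI k l (i + 1) j) \<and>
                                     t = (Inl (rI k l (i + 1) (j + 1)), MoveR))))"

definition Adelta :: "nat \<Rightarrow> nat \<Rightarrow> nat + nat \<Rightarrow> nat tsym \<Rightarrow> ((nat + nat) \<times> dir) option" where
  "Adelta k l q c = (if \<exists>t. Atrans k l q c t then Some (SOME t. Atrans k l q c t) else None)"

definition autA :: "nat \<Rightarrow> nat \<Rightarrow> (nat + nat, nat) tdfa" where
  "autA k l = \<lparr> tdelta = Adelta k l, tinit = Inl 1, tacc = {Inl k} \<rparr>"

end

theory Submission
  imports Defs "HOL-Library.List_Lexorder"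
begin

(* The input a_1 ... a_(N-1) is scanned from left to right. The head enters a_i in state
   r^(i)_1 and zigzags between a_i and a_(i-1) through r^(i)_1, p^(i)_1, r^(i)_2, ...,
   p^(i)_(m_i), r^(i)_(m_i+1); this last state moves on to a_(i+1) in state r^(i+1)_1.
   The listed transitions never conflict, because for fixed i the states r^(i)_j, and
   likewise the p^(i)_j, are distinct for distinct j; so this is the run of A. The least
   pair ({},{1}) has m_1 = 0, so the head never zigzags back onto |- , and the greatest
   pair ({},{k}) lets it arrive at -| in state r^(N)_1 = k. *)

lemma ex1_rank:
  fixes lt :: "'a \<Rightarrow> 'a \<Rightarrow> bool"
  assumes "finite S" and "i < card S"
    and irrefl: "\<And>x. \<not> lt x x"
    and transitive: "\<And>x y z. lt x y \<Longrightarrow> lt y z \<Longrightarrow> lt x z"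
    and total: "\<And>x y. x \<in> S \<Longrightarrow> y \<in> S \<Longrightarrow> x \<noteq> y \<Longrightarrow> lt x y \<or> lt y x"
  shows "\<exists>!x. x \<in> S \<and> card {y \<in> S. lt y x} = i"
proof -
  define rank where "rank x = card {y \<in> S. lt y x}" for x
  have rank_less: "rank x < rank y" if "x \<in> S" "lt x y" for x y
  proof -
    have "{z \<in> S. lt z x} \<subset> {z \<in> S. lt z y}"
      using that irrefl transitive by blast
    then show ?thesis
      unfolding rank_def using \<open>finite S\<close> by (simp add: psubset_card_mono)
  qed
  have inj: "inj_on rank S"
  proof (rule inj_onI, rule ccontr)
    fix x y
    assume "x \<in> S" "y \<in> S" "rank x = rank y" "x \<noteq> y"
    then show False
      using total[of x y] rank_less[of x y] rank_less[of y x] by auto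
  qed
  have "rank x < card S" if "x \<in> S" for x
  proof -
    have "{y \<in> S. lt y x} \<subseteq> S - {x}"
      using irrefl by blast
    then have "rank x \<le> card (S - {x})"
      unfolding rank_def using \<open>finite S\<close> by (simp add: card_mono)
    also have "\<dots> < card S"
      using \<open>finite S\<close> that by (rule card_Diff1_less)
    finally show ?thesis .
  qed
  then have "rank ` S = {..<card S}"
    using inj by (intro card_subset_eq) (auto simp: card_image)
  then have "i \<in> rank ` S"
    using \<open>i < card S\<close> by simp
  then obtain x where "x \<in> S" "rank x = i"
    by blast
  with inj show ?thesis
    unfolding rank_def inj_on_def by blast
qed

lemma finite_pairs: "finite (pairs k l)"
proof (rule finite_subset)
  show "pairs k l \<subseteq> Pow {1..l} \<times> Pow {1..k}"
    unfolding pairs_def by auto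
qed simp

lemma pairsD:
  assumes "(P, R) \<in> pairs k l"
  shows "finite P" "finite R" "P \<subseteq> {1..l}" "R \<subseteq> {1..k}" "card R = card P + 1"
  using assms unfolding pairs_def by (auto intro: finite_subset)

lemma set_interleave: "set (interleave xs ys) = set xs \<union> set ys"
  by (induction xs ys rule: interleave.induct) auto

lemma pair_seq_determines_pair:
  assumes "(P, R) \<in> pairs k l"
  shows "R = {n. int n \<in> set (pair_seq (P, R))}"
    and "P = {n. - int n \<in> set (pair_seq (P, R))}"
proof -
  have "set (pair_seq (P, R)) = int ` R \<union> (\<lambda>p. - int p) ` P"
    using pairsD[OF assms] by (simp add: pair_seq_def set_interleave)
  moreover have "0 \<notin> R"
    using pairsD(4)[OF assms] by auto
  moreover have "int n \<noteq> - int p" if "p \<in> P" for n p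
    using pairsD(3)[OF assms] that by fastforce
  moreover have "int r \<noteq> - int n" if "r \<in> R" for n r
    using pairsD(4)[OF assms] that by fastforce
  ultimately show "R = {n. int n \<in> set (pair_seq (P, R))}"
    and "P = {n. - int n \<in> set (pair_seq (P, R))}"
    by (auto simp: image_iff)
qed

lemma inj_on_pair_seq: "inj_on pair_seq (pairs k l)"
proof (rule inj_onI)
  fix a b
  assume "a \<in> pairs k l" "b \<in> pairs k l" "pair_seq a = pair_seq b"
  moreover obtain P R P' R' where "a = (P, R)" "b = (P', R')"
    by fastforce
  ultimately show "a = b"
    using pair_seq_determines_pair[of P R k l] pair_seq_determines_pair[of P' R' k l] by simp
qed

lemma pair_seq_Cons_Min:
  assumes "(P, R) \<in> pairs k l"
  shows "\<exists>rest. pair_seq (P, R) = int (Min R) # rest"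
proof -
  have "R \<noteq> {}" "finite R"
    using pairsD[OF assms] by auto
  then have "sorted_list_of_set R = Min R # sorted_list_of_set (R - {Min R})"
    by (simp add: sorted_list_of_set_nonempty)
  then show ?thesis
    unfolding pair_seq_def by (cases "sorted_list_of_set P") auto
qed

lemma pair_seq_singleton: "pair_seq ({}, {r}) = [int r]"
  by (simp add: pair_seq_def)

lemma pair_less_iff: "pair_less a b \<longleftrightarrow> pair_seq a < pair_seq b"
  by (simp add: pair_less_def list_less_def)

lemma ex1_pair_of_rank:
  assumes "i < numPairs k l"
  shows "\<exists>!x. x \<in> pairs k l \<and> card {y \<in> pairs k l. pair_less y x} = i"
proof (rule ex1_rank)
  show "pair_less x y \<or> pair_less y x" if "x \<in> pairs k l" "y \<in> pairs k l" "x \<noteq> y" for x y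
  proof -
    have "pair_seq x \<noteq> pair_seq y"
      using that inj_on_pair_seq[of k l] by (auto dest: inj_onD)
    then show ?thesis
      unfolding pair_less_iff using neq_iff by blast
  qed
qed (use assms in \<open>auto simp: numPairs_def finite_pairs pair_less_iff\<close>)

lemma pairI_in_pairs:
  assumes "1 \<le> i" "i \<le> numPairs k l"
  shows "pairI k l i \<in> pairs k l"
proof -
  have "i - 1 < numPairs k l"
    using assms by simp
  from theI'[OF ex1_pair_of_rank[OF this]] show ?thesis
    unfolding pairI_def by simp
qed

lemma pairI_eqI:
  assumes "1 \<le> i" "i \<le> numPairs k l" "x \<in> pairs k l"
    and "card {y \<in> pairs k l. pair_less y x} = i - 1"
  shows "pairI k l i = x"
proof -
  have "i - 1 < numPairs k l"
    using assms by simp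
  from the1_equality[OF ex1_pair_of_rank[OF this]] show ?thesis
    unfolding pairI_def using assms by simp
qed

lemma numPairs_pos:
  assumes "0 < k"
  shows "0 < numPairs k l"
proof -
  have "({}, {1}) \<in> pairs k l"
    using assms by (simp add: pairs_def)
  then show ?thesis
    unfolding numPairs_def using finite_pairs by (auto simp: card_gt_0_iff)
qed

lemma pairI_first:
  assumes "0 < k"
  shows "pairI k l 1 = ({}, {1})"
proof (rule pairI_eqI)
  have "\<not> pair_less (P, R) ({}, {1})" if "(P, R) \<in> pairs k l" for P R
  proof -
    have "R \<noteq> {}"
      using pairsD(2,5)[OF that] by auto
    then have "Min R \<in> R"
      using pairsD(2)[OF that] by simp
    then have "1 \<le> Min R"
      using pairsD(4)[OF that] by auto
    then show ?thesis
      using pair_seq_Cons_Min[OF that] by (auto simp: pair_less_iff pair_seq_singleton)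
  qed
  then have "{y \<in> pairs k l. pair_less y ({}, {1})} = {}"
    by fastforce
  then show "card {y \<in> pairs k l. pair_less y ({}, {1})} = 1 - 1"
    by (simp only: card.empty diff_self)
qed (use assms numPairs_pos[OF assms, of l] in \<open>auto simp: pairs_def\<close>)

lemma pairI_last:
  assumes "0 < k"
  shows "pairI k l (numPairs k l) = ({}, {k})"
proof (rule pairI_eqI)
  show last: "({}, {k}) \<in> pairs k l"
    using assms by (simp add: pairs_def)
  have "pair_less (P, R) ({}, {k})" if "(P, R) \<in> pairs k l" "(P, R) \<noteq> ({}, {k})" for P R
  proof -
    note PR = pairsD[OF that(1)]
    have "Min R < k"
    proof (rule ccontr)
      assume "\<not> Min R < k"
      have "R \<subseteq> {k}"
      proof
        fix r
        assume "r \<in> R"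
        then have "Min R \<le> r" "r \<le> k"
          using PR by auto
        then show "r \<in> {k}"
          using \<open>\<not> Min R < k\<close> by simp
      qed
      moreover have "R \<noteq> {}"
        using PR by auto
      ultimately have "R = {k}"
        by blast
      then show False
        using PR that(2) by simp
    qed
    then show ?thesis
      using pair_seq_Cons_Min[OF that(1)] by (auto simp: pair_less_iff pair_seq_singleton)
  qed
  then have "{y \<in> pairs k l. pair_less y ({}, {k})} = pairs k l - {({}, {k})}"
    by (auto simp: split_paired_all pair_less_iff)
  then show "card {y \<in> pairs k l. pair_less y ({}, {k})} = numPairs k l - 1"
    using last finite_pairs by (simp add: numPairs_def)
qed (use numPairs_pos[OF assms, of l] in auto)

lemma inj_on_nth_pred:
  assumes "distinct xs"
  shows "inj_on (\<lambda>j. xs ! (j - 1)) {1..length xs}"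
  using assms by (auto simp: inj_on_def nth_eq_iff_index_eq)

lemma inj_on_rI:
  assumes "1 \<le> i" "i \<le> numPairs k l"
  shows "inj_on (rI k l i) {1..mI k l i + 1}"
proof -
  obtain P R where PR: "pairI k l i = (P, R)"
    by fastforce
  then have "length (sorted_list_of_set R) = mI k l i + 1"
    using pairsD[OF pairI_in_pairs[OF assms, unfolded PR]] by (simp add: mI_def)
  moreover have "rI k l i = (\<lambda>j. sorted_list_of_set R ! (j - 1))"
    by (simp add: fun_eq_iff rI_def PR)
  ultimately show ?thesis
    using inj_on_nth_pred[of "sorted_list_of_set R"] by simp
qed

lemma inj_on_pI:
  assumes "1 \<le> i" "i \<le> numPairs k l"
  shows "inj_on (pI k l i) {1..mI k l i}"
proof -
  obtain P R where PR: "pairI k l i = (P, R)"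
    by fastforce
  then have "length (sorted_list_of_set P) = mI k l i"
    using pairsD[OF pairI_in_pairs[OF assms, unfolded PR]] by (simp add: mI_def)
  moreover have "pI k l i = (\<lambda>j. sorted_list_of_set P ! (j - 1))"
    by (simp add: fun_eq_iff pI_def PR)
  ultimately show ?thesis
    using inj_on_nth_pred[of "sorted_list_of_set P"] by simp
qed

lemma Atrans_functional:
  assumes "Atrans k l q c t" "Atrans k l q c t'"
  shows "t' = t"
proof (cases c)
  case (Letter i)
  then have i: "1 \<le> i" "i + 1 \<le> numPairs k l"
    using assms(1) unfolding Atrans_def by auto
  have r_inj: "rI k l i j = rI k l i j' \<longleftrightarrow> j = j'"
    if "j \<in> {1..mI k l i + 1}" "j' \<in> {1..mI k l i + 1}" for j j'
    using that inj_on_rI[of i k l] i by (auto dest: inj_onD)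
  have p_inj: "pI k l (Suc i) j = pI k l (Suc i) j' \<longleftrightarrow> j = j'"
    if "j \<in> {1..mI k l (Suc i)}" "j' \<in> {1..mI k l (Suc i)}" for j j'
    using that inj_on_pI[of "Suc i" k l] i by (auto dest: inj_onD)
  show ?thesis
    using assms unfolding Atrans_def Letter
    by (auto simp: r_inj p_inj)
qed (use assms in \<open>auto simp: Atrans_def\<close>)

lemma Adelta_eqI:
  assumes "Atrans k l q c t"
  shows "Adelta k l q c = Some t"
proof -
  have "Atrans k l q c (SOME t. Atrans k l q c t)"
    using assms by (rule someI)
  then have "(SOME t. Atrans k l q c t) = t"
    by (rule Atrans_functional[OF assms])
  moreover have "\<exists>t. Atrans k l q c t"
    using assms ..
  ultimately show ?thesis
    unfolding Adelta_def by simp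
qed

definition reachable :: "('q, 's, 'z) tdfa_scheme \<Rightarrow> 's list \<Rightarrow> 'q \<times> int \<Rightarrow> bool" where
  "reachable M w c \<longleftrightarrow> (\<exists>n. trun M w n = Some c)"

lemma reachable_init: "reachable M w (tinit M, 0)"
  unfolding reachable_def trun_def by (auto intro: exI[of _ 0])

lemma reachable_step:
  assumes "reachable M w (q, p)" "tape w p = Some c" "tdelta M q c = Some (r, d)"
  shows "reachable M w (r, p + dir_val d)"
proof -
  obtain n where "trun M w n = Some (q, p)"
    using assms(1) unfolding reachable_def by blast
  then have "trun M w (Suc n) = Some (r, p + dir_val d)"
    using assms(2,3) by (simp add: trun_def tstep_def)
  then show ?thesis
    unfolding reachable_def by blast
qed

lemma taccepts_iff_reachable:
  "taccepts M w \<longleftrightarrow> (\<exists>q \<in> tacc M. reachable M w (q, int (length w) + 1))"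
  unfolding taccepts_def reachable_def by blast

lemma tape_upt:
  assumes "1 \<le> i" "i < n"
  shows "tape [1..<n] (int i) = Some (Letter i)"
  using assms by (simp add: tape_def nat_diff_distrib)

abbreviation reachesA :: "nat \<Rightarrow> nat \<Rightarrow> (nat + nat) \<times> int \<Rightarrow> bool" where
  "reachesA k l \<equiv> reachable (autA k l) [1..<numPairs k l]"

lemma reachesA_step:
  assumes "reachesA k l (q, p)" "tape [1..<numPairs k l] p = Some c" "Atrans k l q c (r, d)"
  shows "reachesA k l (r, p + dir_val d)"
  using reachable_step[OF assms(1,2)] Adelta_eqI[OF assms(3)] by (simp add: autA_def)

lemma reachesA_start: "reachesA k l (Inl (rI k l 1 1), 1)"
proof -
  have "reachesA k l (Inl 1, 0)"
    using reachable_init[of "autA k l"] by (simp add: autA_def)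
  from reachesA_step[OF this] show ?thesis
    by (simp add: tape_def Atrans_def dir_val_def)
qed

lemma reachesA_zigzag:
  assumes "2 \<le> i" "i < numPairs k l" "1 \<le> j" "j \<le> mI k l i"
    and "reachesA k l (Inl (rI k l i j), int i)"
  shows "reachesA k l (Inl (rI k l i (j + 1)), int i)"
proof -
  define h where "h = i - 1"
  have i: "i = h + 1" and "1 \<le> h"
    using assms(1) unfolding h_def by auto
  have "Atrans k l (Inl (rI k l i j)) (Letter i) (Inr (pI k l i j), MoveL)"
    using assms(1-4) unfolding Atrans_def by auto
  from reachesA_step[OF assms(5) tape_upt[OF _ assms(2)] this] assms(1)
  have "reachesA k l (Inr (pI k l i j), int h)"
    by (simp add: dir_val_def i)
  moreover have "tape [1..<numPairs k l] (int h) = Some (Letter h)"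
    using assms(2) \<open>1 \<le> h\<close> by (intro tape_upt) (auto simp: i)
  moreover have "Atrans k l (Inr (pI k l i j)) (Letter h) (Inl (rI k l i (j + 1)), MoveR)"
    using assms(2-4) \<open>1 \<le> h\<close> unfolding Atrans_def i by auto
  ultimately have "reachesA k l (Inl (rI k l i (j + 1)), int h + dir_val MoveR)"
    by (rule reachesA_step)
  then show ?thesis
    by (simp add: dir_val_def i add.commute)
qed

lemma reachesA_next_letter:
  assumes "0 < k" "1 \<le> i" "i < numPairs k l"
    and "reachesA k l (Inl (rI k l i 1), int i)"
  shows "reachesA k l (Inl (rI k l (i + 1) 1), int (i + 1))"
proof -
  have "reachesA k l (Inl (rI k l i (j + 1)), int i)" if "j \<le> mI k l i" for j
    using that
  proof (induction j)
    case 0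
    show ?case
      using assms(4) by simp
  next
    case (Suc j)
    have "i \<noteq> 1"
      using Suc.prems pairI_first[OF assms(1)] by (auto simp: mI_def)
    then show ?case
      using reachesA_zigzag[of i k l "j + 1"] Suc assms(2,3) by simp
  qed
  then have "reachesA k l (Inl (rI k l i (mI k l i + 1)), int i)"
    by blast
  moreover have "tape [1..<numPairs k l] (int i) = Some (Letter i)"
    using assms(2,3) by (rule tape_upt)
  moreover have "Atrans k l (Inl (rI k l i (mI k l i + 1))) (Letter i) (Inl (rI k l (i + 1) 1), MoveR)"
    using assms(2,3) unfolding Atrans_def by auto
  ultimately have "reachesA k l (Inl (rI k l (i + 1) 1), int i + dir_val MoveR)"
    by (rule reachesA_step)
  then show ?thesis
    by (simp add: dir_val_def add.commute)
qed

lemma reachesA_letter: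
  assumes "0 < k" "1 \<le> i" "i \<le> numPairs k l"
  shows "reachesA k l (Inl (rI k l i 1), int i)"
  using assms(2,3)
proof (induction i rule: dec_induct)
  case base
  show ?case
    using reachesA_start by simp
next
  case (step i)
  then show ?case
    using reachesA_next_letter[OF assms(1)] by simp
qed

theorem mainTheorem4:
  fixes k l :: nat
  assumes "k \<ge> 2"
  shows "taccepts (autA k l) [1..<numPairs k l]"
proof -
  have "0 < k"
    using assms by simp
  then have "1 \<le> numPairs k l"
    using numPairs_pos by (simp add: Suc_le_eq)
  then have "reachesA k l (Inl (rI k l (numPairs k l) 1), int (numPairs k l))"
    using reachesA_letter[OF \<open>0 < k\<close>] by blast
  moreover have "rI k l (numPairs k l) 1 = k"
    by (simp add: rI_def pairI_last[OF \<open>0 < k\<close>])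
  ultimately show ?thesis
    unfolding taccepts_iff_reachable using \<open>1 \<le> numPairs k l\<close>
    by (auto simp: autA_def of_nat_diff)
qed

end
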